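(* Assume the setting in the context. Let $x_i,x_j,x_k\in X$ be distinct, and assume $x_k$ is neither a parent of $x_i$ nor a parent of $x_j$. If there exist $G_1,G_2\in\mathcal G$, $M\subseteq X\setminus\{x_i,x_j\}$ and $N\subseteq X\setminus\{x_i,x_j,x_k\}$ with $x_i-G_1(M)\perp\!\!\!\perp x_j-G_2(N\cup\{x_k\})$, then there exist $G_1',G_2'\in\mathcal G$, $M'\subseteq X\setminus\{x_i,x_j\}$ and $N'\subseteq X\setminus\{x_i,x_j,x_k\}$ with $x_i-G_1'(M')\perp\!\!\!\perp x_j-G_2'(N')$.
   Context: Model: $X$ is a finite set of observed random variables and $U$ a finite set of unobserved random variables; $V=X\cup U$ and $G=(V,E)$ is a DAG on $V$. Each $v_i\in V$ satisfies $v_i=\sum_{x_j\in \mathrm{pa}(v_i)\cap X} f^{(i)}_j(x_j)+\sum_{u_k\in\mathrm{pa}(v_i)\cap U} f^{(i)}_k(u_k)+n_i$, where the $f$'s are nonlinear functions and the external noises $n_i$ are jointly independent. "Parent", "ancestor", "path", "d-separation" refer to $G$ (a path has distinct vertices). Causal Faithfulness Condition (CFC): any conditional independence among variables of $V$ that is not entailed by d-separation in $G$ does not hold. $\perp\!\!\!\perp$ denotes statistical independence, $\not\perp\!\!\!\perp$ dependence. Function class: $\mathcal G$ is a class of generalized additive functions: for $G\in\mathcal G$ and a set $M$ of observed variables, $G(M)=\sum_{x_m\in M} g_m(x_m)$ (with $G(\emptyset)=0$). It satisfies: for any $x_i,x_j\in X$, sets $M,N\subseteq X$, $G_1,G_2\in\mathcal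 G$ and external noise $n_k$, if $n_k\not\perp\!\!\!\perp x_i-G_1(M)$ and $n_k\not\perp\!\!\!\perp x_j-G_2(N)$ then $x_i-G_1(M)\not\perp\!\!\!\perp x_j-G_2(N)$. Definitions, for $X'\subseteq X$ and $x_i,x_j\in X'$: an unobserved causal path (UCP) from $x_i$ to $x_j$ w.r.t. $X'$ is a directed path $x_i\to\cdots\to v_k\to x_j$ in $G$ with $v_k\notin X'$; an unobserved backdoor path (UBP) between $x_i$ and $x_j$ w.r.t. $X'$ is a path $x_i\leftarrow v_k\leftarrow\cdots\leftarrow v\to\cdots\to v_l\to x_j$ with $v_k,v_l\notin X'$ (allowing $v=v_k$, $v=v_l$, or $v=v_k=v_l$; $v$ may be in $X'$). "UBP/UCP between $x_i$ and $x_j$" means a UBP or a UCP in either direction. $x_j$ is a visible parent of $x_i$ w.r.t. $X'$ if $x_j$ is a parent of $x_i$ and there is no UBP/UCP between them w.r.t. $X'$; $(x_i,x_j)$ is a visible non-edge w.r.t. $X'$ if there is no edge between them and no UBP/UCP between them w.r.t. $X'$; $(x_i,x_j)$ is invisible w.r.t. $X'$ if there is a UBP/UCP between them w.r.t. $X'$. When $X'$ is omitted, $X'=X$. Standing facts (taken as known), for $X'\subseteq X$ and distinct $x_i,x_j\in X'$: (F1) $x_j$ is a visible parent of $x_i$ w.r.t. $X'$ iff [for all $G_1,G_2\in\mathcal G$, $M\subseteq X'\setminus\{x_i,x_j\}$, $N\subseteq X'\setminus\{x_j\}$: $x_i-G_1(M)\not\perp\!\!\!\perp x_j-G_2(N)$]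 and [there exist $G_1,G_2\in\mathcal G$, $M\subseteq X'\setminus\{x_i\}$, $N\subseteq X'\setminus\{x_i,x_j\}$ with $x_i-G_1(M)\perp\!\!\!\perp x_j-G_2(N)$]. (F2) $(x_i,x_j)$ is a visible non-edge w.r.t. $X'$ iff there exist $G_1,G_2\in\mathcal G$ and $M,N\subseteq X'\setminus\{x_i,x_j\}$ with $x_i-G_1(M)\perp\!\!\!\perp x_j-G_2(N)$. (F3) $(x_i,x_j)$ is invisible w.r.t. $X'$ iff for all $M\subseteq X'\setminus\{x_i\}$, $N\subseteq X'\setminus\{x_j\}$, $G_1,G_2\in\mathcal G$: $x_i-G_1(M)\not\perp\!\!\!\perp x_j-G_2(N)$. *)

theory Defs
  imports "HOL-Probability.Probability"
begin

definition pa :: "('v \<times> 'v) set \<Rightarrow> 'v \<Rightarrow> 'v set" where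
  "pa E v = {u. (u, v) \<in> E}"

definition dpath :: "('v \<times> 'v) set \<Rightarrow> 'v list \<Rightarrow> bool" where
  "dpath E ps \<longleftrightarrow> distinct ps \<and> 2 \<le> length ps \<and>
     (\<forall>n. Suc n < length ps \<longrightarrow> (ps ! n, ps ! Suc n) \<in> E)"

definition UCP :: "('v \<times> 'v) set \<Rightarrow> 'v set \<Rightarrow> 'v \<Rightarrow> 'v \<Rightarrow> bool" where
  "UCP E X' a b \<longleftrightarrow> (\<exists>ps. dpath E ps \<and> hd ps = a \<and> last ps = b \<and>
      ps ! (length ps - 2) \<notin> X')"

text \<open>Unobserved backdoor path between a and b w.r.t. X':
  a \<leftarrow> v_k \<leftarrow> ... \<leftarrow> v \<rightarrow> ... \<rightarrow> v_l \<rightarrow> b, v_k, v_l not in X', all vertices distinct.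
  It is the concatenation of two directed paths p (from v to a) and q (from v to b)
  sharing only their first vertex v.\<close>
definition UBP :: "('v \<times> 'v) set \<Rightarrow> 'v set \<Rightarrow> 'v \<Rightarrow> 'v \<Rightarrow> bool" where
  "UBP E X' a b \<longleftrightarrow> (\<exists>p q. dpath E p \<and> dpath E q \<and> hd p = hd q \<and>
      set p \<inter> set q = {hd p} \<and> last p = a \<and> last q = b \<and>
      p ! (length p - 2) \<notin> X' \<and> q ! (length q - 2) \<notin> X')"

definition UBP_or_UCP :: "('v \<times> 'v) set \<Rightarrow> 'v set \<Rightarrow> 'v \<Rightarrow> 'v \<Rightarrow> bool" where
  "UBP_or_UCP E X' a b \<longleftrightarrow> UBP E X' a b \<or> UBP E X' b a \<or> UCP E X' a b \<or> UCP E X' b a"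

definition visible_parent :: "('v \<times> 'v) set \<Rightarrow> 'v set \<Rightarrow> 'v \<Rightarrow> 'v \<Rightarrow> bool" where
  "visible_parent E X' xj xi \<longleftrightarrow> xj \<in> pa E xi \<and> \<not> UBP_or_UCP E X' xi xj"

definition visible_non_edge :: "('v \<times> 'v) set \<Rightarrow> 'v set \<Rightarrow> 'v \<Rightarrow> 'v \<Rightarrow> bool" where
  "visible_non_edge E X' xi xj \<longleftrightarrow> (xi, xj) \<notin> E \<and> (xj, xi) \<notin> E \<and> \<not> UBP_or_UCP E X' xi xj"

definition invisible :: "('v \<times> 'v) set \<Rightarrow> 'v set \<Rightarrow> 'v \<Rightarrow> 'v \<Rightarrow> bool" where
  "invisible E X' xi xj \<longleftrightarrow> UBP_or_UCP E X' xi xj"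

definition upath :: "('v \<times> 'v) set \<Rightarrow> 'v list \<Rightarrow> bool" where
  "upath E ps \<longleftrightarrow> distinct ps \<and> ps \<noteq> [] \<and>
     (\<forall>n. Suc n < length ps \<longrightarrow> (ps ! n, ps ! Suc n) \<in> E \<or> (ps ! Suc n, ps ! n) \<in> E)"

definition collider :: "('v \<times> 'v) set \<Rightarrow> 'v list \<Rightarrow> nat \<Rightarrow> bool" where
  "collider E ps n \<longleftrightarrow> (ps ! (n - 1), ps ! n) \<in> E \<and> (ps ! Suc n, ps ! n) \<in> E"

definition blocked :: "('v \<times> 'v) set \<Rightarrow> 'v set \<Rightarrow> 'v list \<Rightarrow> bool" where
  "blocked E Z ps \<longleftrightarrow> (\<exists>n. 0 < n \<and> Suc n < length ps \<and>
     ((\<not> collider E ps n \<and> ps ! n \<in> Z) \<or>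
      (collider E ps n \<and> {w. (ps ! n, w) \<in> E\<^sup>*} \<inter> Z = {})))"

definition d_separated :: "('v \<times> 'v) set \<Rightarrow> 'v set \<Rightarrow> 'v set \<Rightarrow> 'v set \<Rightarrow> bool" where
  "d_separated E A B Z \<longleftrightarrow>
     (\<forall>ps. upath E ps \<and> hd ps \<in> A \<and> last ps \<in> B \<longrightarrow> blocked E Z ps)"

definition gen_alg :: "'w measure \<Rightarrow> ('v \<Rightarrow> 'w \<Rightarrow> real) \<Rightarrow> 'v set \<Rightarrow> 'w measure" where
  "gen_alg M val Z = vimage_algebra (space M) (\<lambda>\<omega>. restrict (\<lambda>v. val v \<omega>) Z) (PiM Z (\<lambda>_. borel))"

definition cond_indep :: "'w measure \<Rightarrow> ('v \<Rightarrow> 'w \<Rightarrow> real) \<Rightarrow> 'v set \<Rightarrow> 'v set \<Rightarrow> 'v set \<Rightarrow> bool" where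
  "cond_indep M val A B Z \<longleftrightarrow>
     (\<forall>a \<in> sets (gen_alg M val A). \<forall>b \<in> sets (gen_alg M val B).
        AE \<omega> in M. real_cond_exp M (gen_alg M val Z) (indicator (a \<inter> b)) \<omega> =
           real_cond_exp M (gen_alg M val Z) (indicator a) \<omega> *
           real_cond_exp M (gen_alg M val Z) (indicator b) \<omega>)"

definition indep :: "'w measure \<Rightarrow> ('w \<Rightarrow> real) \<Rightarrow> ('w \<Rightarrow> real) \<Rightarrow> bool" where
  "indep M A B \<longleftrightarrow> prob_space.indep_var M borel A borel B"

definition Gfun :: "('v \<Rightarrow> 'w \<Rightarrow> real) \<Rightarrow> ('v \<Rightarrow> real \<Rightarrow> real) \<Rightarrow> 'v set \<Rightarrow> 'w \<Rightarrow> real" where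
  "Gfun val g S = (\<lambda>\<omega>. \<Sum>m\<in>S. g m (val m \<omega>))"

definition resid :: "('v \<Rightarrow> 'w \<Rightarrow> real) \<Rightarrow> 'v \<Rightarrow> ('v \<Rightarrow> real \<Rightarrow> real) \<Rightarrow> 'v set \<Rightarrow> 'w \<Rightarrow> real" where
  "resid val x g S = (\<lambda>\<omega>. val x \<omega> - Gfun val g S \<omega>)"

definition nonlinear :: "(real \<Rightarrow> real) \<Rightarrow> bool" where
  "nonlinear h \<longleftrightarrow> \<not> (\<exists>a b. \<forall>t. h t = a * t + b)"

text \<open>Additive nonlinear SCM with latent variables U = V - X on a DAG (V, E), jointly independent
  external noises, and the causal faithfulness condition.\<close>
definition ANM_model ::
  "'w measure \<Rightarrow> 'v set \<Rightarrow> 'v set \<Rightarrow> ('v \<times> 'v) set \<Rightarrow> ('v \<Rightarrow> 'v \<Rightarrow> real \<Rightarrow> real)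
    \<Rightarrow> ('v \<Rightarrow> 'w \<Rightarrow> real) \<Rightarrow> ('v \<Rightarrow> 'w \<Rightarrow> real) \<Rightarrow> bool" where
  "ANM_model M V X E f noise val \<longleftrightarrow>
     prob_space M \<and> finite V \<and> X \<subseteq> V \<and> E \<subseteq> V \<times> V \<and> acyclic E \<and>
     (\<forall>v\<in>V. \<forall>p\<in>pa E v. nonlinear (f v p) \<and> f v p \<in> borel_measurable borel) \<and>
     (\<forall>v\<in>V. noise v \<in> borel_measurable M) \<and>
     prob_space.indep_vars M (\<lambda>_. borel) noise V \<and>
     (\<forall>v\<in>V. \<forall>\<omega>\<in>space M. val v \<omega> = (\<Sum>p\<in>pa E v. f v p (val p \<omega>)) + noise v \<omega>) \<and>
     \<comment> \<open>CFC\<close>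
     (\<forall>A B Z. A \<subseteq> V \<and> B \<subseteq> V \<and> Z \<subseteq> V \<and> A \<noteq> {} \<and> B \<noteq> {} \<and>
        A \<inter> B = {} \<and> A \<inter> Z = {} \<and> B \<inter> Z = {} \<and>
        cond_indep M val A B Z \<longrightarrow> d_separated E A B Z)"

definition GAM_class ::
  "'w measure \<Rightarrow> 'v set \<Rightarrow> 'v set \<Rightarrow> ('v \<Rightarrow> 'w \<Rightarrow> real) \<Rightarrow> ('v \<Rightarrow> 'w \<Rightarrow> real)
    \<Rightarrow> ('v \<Rightarrow> real \<Rightarrow> real) set \<Rightarrow> bool" where
  "GAM_class M V X noise val \<G> \<longleftrightarrow>
     (\<forall>xi\<in>X. \<forall>xj\<in>X. \<forall>Ms N G1 G2 k. Ms \<subseteq> X \<and> N \<subseteq> X \<and> G1 \<in> \<G> \<and> G2 \<in> \<G> \<and> k \<in> V \<and>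
        \<not> indep M (noise k) (resid val xi G1 Ms) \<and> \<not> indep M (noise k) (resid val xj G2 N) \<longrightarrow>
        \<not> indep M (resid val xi G1 Ms) (resid val xj G2 N))"

text \<open>Standing facts F1, F2, F3 (taken as known).\<close>
definition standing_facts ::
  "'w measure \<Rightarrow> 'v set \<Rightarrow> ('v \<times> 'v) set \<Rightarrow> ('v \<Rightarrow> 'w \<Rightarrow> real)
    \<Rightarrow> ('v \<Rightarrow> real \<Rightarrow> real) set \<Rightarrow> bool" where
  "standing_facts M X E val \<G> \<longleftrightarrow>
    (\<forall>X' xi xj. X' \<subseteq> X \<and> xi \<in> X' \<and> xj \<in> X' \<and> xi \<noteq> xj \<longrightarrow>
      (visible_parent E X' xj xi \<longleftrightarrow>
         (\<forall>G1\<in>\<G>. \<forall>G2\<in>\<G>. \<forall>Ms N. Ms \<subseteq> X' - {xi, xj} \<and> N \<subseteq> X' - {xj} \<longrightarrow>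
            \<not> indep M (resid val xi G1 Ms) (resid val xj G2 N)) \<and>
         (\<exists>G1\<in>\<G>. \<exists>G2\<in>\<G>. \<exists>Ms N. Ms \<subseteq> X' - {xi} \<and> N \<subseteq> X' - {xi, xj} \<and>
            indep M (resid val xi G1 Ms) (resid val xj G2 N))) \<and>
      (visible_non_edge E X' xi xj \<longleftrightarrow>
         (\<exists>G1\<in>\<G>. \<exists>G2\<in>\<G>. \<exists>Ms N. Ms \<subseteq> X' - {xi, xj} \<and> N \<subseteq> X' - {xi, xj} \<and>
            indep M (resid val xi G1 Ms) (resid val xj G2 N))) \<and>
      (invisible E X' xi xj \<longleftrightarrow>
         (\<forall>G1\<in>\<G>. \<forall>G2\<in>\<G>. \<forall>Ms N. Ms \<subseteq> X' - {xi} \<and> N \<subseteq> X' - {xj} \<longrightarrow>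
            \<not> indep M (resid val xi G1 Ms) (resid val xj G2 N))))"

end

theory Submission
  imports Defs
begin

text \<open>By F2 the hypothesis makes \<open>(xi, xj)\<close> a visible non-edge w.r.t. \<open>X\<close>. The last hidden
  vertex of an unobserved backdoor or causal path into \<open>xi\<close> or \<open>xj\<close> is a parent of that
  endpoint, so hiding \<open>xk\<close>, which is a parent of neither, creates no such path: the pair is still
  a visible non-edge w.r.t. \<open>X - {xk}\<close>, and F2 applied there yields residuals that avoid \<open>xk\<close>.\<close>

lemma dpath_penultimate_edge:
  assumes "dpath E ps"
  shows "(ps ! (length ps - 2), last ps) \<in> E"
proof -
  have len: "2 \<le> length ps" using assms unfolding dpath_def by auto
  then have "(ps ! (length ps - 2), ps ! Suc (length ps - 2)) \<in> E"
    using assms unfolding dpath_def by auto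
  moreover have "ps ! Suc (length ps - 2) = last ps"
    using len by (subst last_conv_nth) (auto simp: Suc_diff_Suc numeral_2_eq_2)
  ultimately show ?thesis by simp
qed

lemma UBP_or_UCP_hide_nonparents:
  assumes path: "UBP_or_UCP E X' a b" and "X' \<subseteq> X"
    and nonparent: "\<And>v. v \<in> X - X' \<Longrightarrow> (v, a) \<notin> E \<and> (v, b) \<notin> E"
  shows "UBP_or_UCP E X a b"
proof -
  have hidden: "ps ! (length ps - 2) \<notin> X"
    if "dpath E ps" "last ps \<in> {a, b}" "ps ! (length ps - 2) \<notin> X'" for ps
    using dpath_penultimate_edge[OF that(1)] that(2,3) nonparent by blast
  have "UCP E X c d" if "UCP E X' c d" "d \<in> {a, b}" for c d
  proof -
    from \<open>UCP E X' c d\<close> obtain ps where "dpath E ps" "hd ps = c" "last ps = d"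
      "ps ! (length ps - 2) \<notin> X'"
      unfolding UCP_def by blast
    with that hidden show ?thesis unfolding UCP_def by blast
  qed
  moreover have "UBP E X c d" if "UBP E X' c d" "c \<in> {a, b}" "d \<in> {a, b}" for c d
  proof -
    from \<open>UBP E X' c d\<close> obtain p q where "dpath E p" "dpath E q" "hd p = hd q"
      "set p \<inter> set q = {hd p}" "last p = c" "last q = d"
      "p ! (length p - 2) \<notin> X'" "q ! (length q - 2) \<notin> X'"
      unfolding UBP_def by blast
    with that hidden show ?thesis unfolding UBP_def by blast
  qed
  ultimately show ?thesis using path unfolding UBP_or_UCP_def by blast
qed

lemma visible_non_edge_hide_nonparents:
  assumes "visible_non_edge E X a b" "X' \<subseteq> X"
    and "\<And>v. v \<in> X - X' \<Longrightarrow> (v, a) \<notin> E \<and> (v, b) \<notin> E"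
  shows "visible_non_edge E X' a b"
  using assms UBP_or_UCP_hide_nonparents[of E X' a b X] unfolding visible_non_edge_def by blast

lemma standing_facts_visible_non_edge_iff:
  assumes "standing_facts M X E val \<G>" "X' \<subseteq> X" "a \<in> X'" "b \<in> X'" "a \<noteq> b"
  shows "visible_non_edge E X' a b \<longleftrightarrow>
    (\<exists>G1\<in>\<G>. \<exists>G2\<in>\<G>. \<exists>Ms N. Ms \<subseteq> X' - {a, b} \<and> N \<subseteq> X' - {a, b} \<and>
       indep M (resid val a G1 Ms) (resid val b G2 N))"
  using assms(1) unfolding standing_facts_def by (meson assms(2-5))

theorem proposition5:
  fixes M :: "'w measure" and V X :: "'v set" and E :: "('v \<times> 'v) set"
    and f :: "'v \<Rightarrow> 'v \<Rightarrow> real \<Rightarrow> real" and noise val :: "'v \<Rightarrow> 'w \<Rightarrow> real"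
    and \<G> :: "('v \<Rightarrow> real \<Rightarrow> real) set"
    and xi xj xk :: 'v
  assumes model: "ANM_model M V X E f noise val"
    and Gclass: "GAM_class M V X noise val \<G>"
    and facts: "standing_facts M X E val \<G>"
    and xs: "xi \<in> X" "xj \<in> X" "xk \<in> X" "xi \<noteq> xj" "xi \<noteq> xk" "xj \<noteq> xk"
    and notpa: "xk \<notin> pa E xi" "xk \<notin> pa E xj"
    and hyp: "\<exists>G1\<in>\<G>. \<exists>G2\<in>\<G>. \<exists>Ms N. Ms \<subseteq> X - {xi, xj} \<and> N \<subseteq> X - {xi, xj, xk} \<and>
               indep M (resid val xi G1 Ms) (resid val xj G2 (N \<union> {xk}))"
  shows "\<exists>G1'\<in>\<G>. \<exists>G2'\<in>\<G>. \<exists>Ms' N'. Ms' \<subseteq> X - {xi, xj} \<and> N' \<subseteq> X - {xi, xj, xk} \<and>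
               indep M (resid val xi G1' Ms') (resid val xj G2' N')"
proof -
  have "visible_non_edge E X xi xj"
  proof -
    from hyp obtain G1 G2 Ms N where "G1 \<in> \<G>" "G2 \<in> \<G>" "Ms \<subseteq> X - {xi, xj}"
      "N \<subseteq> X - {xi, xj, xk}" "indep M (resid val xi G1 Ms) (resid val xj G2 (N \<union> {xk}))"
      by blast
    moreover have "N \<union> {xk} \<subseteq> X - {xi, xj}" using \<open>N \<subseteq> X - {xi, xj, xk}\<close> xs by auto
    ultimately show ?thesis
      using standing_facts_visible_non_edge_iff[OF facts order_refl xs(1,2,4)] by blast
  qed
  then have "visible_non_edge E (X - {xk}) xi xj"
    by (rule visible_non_edge_hide_nonparents) (use notpa in \<open>auto simp: pa_def\<close>)
  then obtain G1 G2 Ms N where "G1 \<in> \<G>" "G2 \<in> \<G>" "Ms \<subseteq> X - {xk} - {xi, xj}"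
    "N \<subseteq> X - {xk} - {xi, xj}" "indep M (resid val xi G1 Ms) (resid val xj G2 N)"
    using standing_facts_visible_non_edge_iff[OF facts, of "X - {xk}"] xs by auto
  then show ?thesis by blast
qed

end
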